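(* The family $\mathcal{T}_n \subset 2^{\binom{[n]}{2}}$ of all labelled spanning trees of $K_n$ (identified with their edge sets) is $(n/2, n-1)$-spread.
   Context: For $\mathcal{F}\subset 2^{[m]}$ and $X\subset[m]$, $\mathcal{F}(X):=\{A\setminus X : A\in\mathcal{F},\ X\subset A\}$. For $r>1$, $\mathcal{F}$ is $r$-spread if $|\mathcal{F}(X)|\le r^{-|X|}|\mathcal{F}|$ for all $X\subset[m]$. $\mathcal{F}$ is $(r,t)$-spread if for every $T\subset[m]$ with $|T|\le t$ the family $\mathcal{F}(T)$ is $r$-spread, i.e. for every such $T$ and every $U$ with $T\subseteq U\subseteq[m]$, $|\mathcal{F}(U)|\le r^{-(|U|-|T|)}|\mathcal{F}(T)|$. Here $[m]$ is the ground set $\binom{[n]}{2}$ of edges of $K_n$. *)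

theory Defs
  imports Complex_Main
begin

definition link :: "'a set set \<Rightarrow> 'a set \<Rightarrow> 'a set set" where
  "link F X = {A - X | A. A \<in> F \<and> X \<subseteq> A}"

definition spread :: "'a set \<Rightarrow> real \<Rightarrow> 'a set set \<Rightarrow> bool" where
  "spread M r F \<longleftrightarrow>
     (\<forall>X. X \<subseteq> M \<longrightarrow> real (card (link F X)) \<le> r powi (- int (card X)) * real (card F))"

definition rt_spread :: "'a set \<Rightarrow> real \<Rightarrow> nat \<Rightarrow> 'a set set \<Rightarrow> bool" where
  "rt_spread M r t F \<longleftrightarrow>
     (\<forall>T. T \<subseteq> M \<and> card T \<le> t \<longrightarrow> spread M r (link F T))"

definition Kn_edges :: "nat \<Rightarrow> nat set set" where
  "Kn_edges n = {{u, v} | u v. u \<in> {1..n} \<and> v \<in> {1..n} \<and> u \<noteq> v}"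

definition graph_connected :: "nat \<Rightarrow> nat set set \<Rightarrow> bool" where
  "graph_connected n E \<longleftrightarrow>
     (\<forall>u\<in>{1..n}. \<forall>v\<in>{1..n}. (u, v) \<in> {(x, y). {x, y} \<in> E}\<^sup>*)"

definition graph_acyclic :: "nat set set \<Rightarrow> bool" where
  "graph_acyclic E \<longleftrightarrow>
     \<not> (\<exists>vs. length vs \<ge> 3 \<and> distinct vs \<and>
            (\<forall>i < length vs. {vs ! i, vs ! ((i + 1) mod length vs)} \<in> E))"

definition spanning_trees :: "nat \<Rightarrow> nat set set set" where
  "spanning_trees n = {E. E \<subseteq> Kn_edges n \<and> graph_connected n E \<and> graph_acyclic E}"

end

theory Submission
  imports Defs "HOL-Library.Transitive_Closure_Table"
begin

(*
  Fix an edge f = uv of K_n outside Y. Deleting f from a spanning tree T containing Y + f splits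
  it into a u-side and a v-side; for any vertex w, joining w to the endpoint of f on the other
  side gives a spanning tree containing Y. This maps (trees containing Y + f) x [n] into the
  trees containing Y, and at most one pair with w on the u-side (resp. v-side) reaches a given
  tree, so n |F(Y + f)| <= 2 |F(Y)|. Adding the edges of X one at a time gives
  |F(T u X)| <= (n/2)^-|X| |F(T)| for X disjoint from T, i.e. every link F(T) is n/2-spread,
  whatever the size of T.
*)

section \<open>Reachability, walks and forests\<close>

definition reach :: "'a set set \<Rightarrow> ('a \<times> 'a) set" where
  "reach E = {(x, y). {x, y} \<in> E}\<^sup>*"

lemma reach_refl [simp]: "(x, x) \<in> reach E"
  by (simp add: reach_def)

lemma reach_edge: "{x, y} \<in> E \<Longrightarrow> (x, y) \<in> reach E"
  by (auto simp: reach_def)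

lemma reach_trans: "(x, y) \<in> reach E \<Longrightarrow> (y, z) \<in> reach E \<Longrightarrow> (x, z) \<in> reach E"
  unfolding reach_def by (rule rtrancl_trans)

lemma reach_sym: "(x, y) \<in> reach E \<Longrightarrow> (y, x) \<in> reach E"
proof -
  have "sym {(x, y). {x, y} \<in> E}"
    by (auto simp: sym_def insert_commute)
  then show "(x, y) \<in> reach E \<Longrightarrow> (y, x) \<in> reach E"
    unfolding reach_def by (meson sym_rtrancl symD)
qed

lemma reach_mono: "E \<subseteq> E' \<Longrightarrow> reach E \<subseteq> reach E'"
  unfolding reach_def by (rule rtrancl_mono) auto

lemma reach_insert_edgeD:
  assumes "(x, y) \<in> reach (insert {p, q} H)"
  shows "(x, y) \<in> reach H \<or> (x, p) \<in> reach H \<and> (q, y) \<in> reach H \<or>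
    (x, q) \<in> reach H \<and> (p, y) \<in> reach H"
  using assms unfolding reach_def[of "insert {p, q} H"]
proof (induction rule: rtrancl_induct)
  case (step y z)
  then consider "(y, z) \<in> reach H" | "y = p" "z = q" | "y = q" "z = p"
    by (auto simp: doubleton_eq_iff intro: reach_edge)
  then show ?case
  proof cases
    case 1
    then show ?thesis using step.IH by (metis reach_trans)
  qed (use step.IH in auto)
qed simp

lemma reach_if_walk:
  "successively (\<lambda>a b. {a, b} \<in> E) (x # ws) \<Longrightarrow> (x, last (x # ws)) \<in> reach E"
proof (induction ws arbitrary: x)
  case (Cons w ws)
  then have "{x, w} \<in> E" "(w, last (w # ws)) \<in> reach E"
    by simp_all
  then show ?case
    using reach_edge reach_trans by fastforce
qed simp

lemma walk_if_rtrancl_path: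
  "rtrancl_path R x ws y \<Longrightarrow> successively R (x # ws) \<and> last (x # ws) = y"
  by (induction rule: rtrancl_path.induct) (auto simp: successively_Cons)

lemma distinct_walk_if_reach:
  assumes "(x, y) \<in> reach E"
  obtains ws where "distinct (x # ws)" "successively (\<lambda>a b. {a, b} \<in> E) (x # ws)"
    "last (x # ws) = y"
proof -
  have "(\<lambda>a b. {a, b} \<in> E)\<^sup>*\<^sup>* x y"
    using assms by (simp add: reach_def rtranclp_rtrancl_eq)
  then obtain ws0 where "rtrancl_path (\<lambda>a b. {a, b} \<in> E) x ws0 y"
    by (auto simp: rtranclp_eq_rtrancl_path)
  then obtain ws where path: "rtrancl_path (\<lambda>a b. {a, b} \<in> E) x ws y" and "distinct (x # ws)"
    by (rule rtrancl_path_distinct)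
  then show ?thesis
    using walk_if_rtrancl_path[OF path] that by blast
qed

lemma cyclic_nth_iff_successively:
  assumes "vs \<noteq> []"
  shows "(\<forall>i < length vs. P (vs ! i) (vs ! ((i + 1) mod length vs))) \<longleftrightarrow>
    successively P (vs @ [hd vs])"
proof -
  have "(vs @ [hd vs]) ! i = vs ! i" "(vs @ [hd vs]) ! Suc i = vs ! ((i + 1) mod length vs)"
    if "i < length vs" for i
    using that assms by (cases "Suc i = length vs"; simp add: nth_append hd_conv_nth)+
  then show ?thesis
    by (simp add: successively_conv_nth)
qed

(* Acyclicity in the form the exchange arguments below need: every edge is a bridge. *)
definition forest :: "'a set set \<Rightarrow> bool" where
  "forest E \<longleftrightarrow> (\<forall>x y. {x, y} \<in> E \<longrightarrow> x \<noteq> y \<longrightarrow> (x, y) \<notin> reach (E - {{x, y}}))"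

lemma forest_bridge: "forest E \<Longrightarrow> {x, y} \<in> E \<Longrightarrow> x \<noteq> y \<Longrightarrow> (x, y) \<notin> reach (E - {{x, y}})"
  unfolding forest_def by blast

lemma forest_if_graph_acyclic:
  assumes "graph_acyclic E"
  shows "forest E"
  unfolding forest_def
proof (intro allI impI notI)
  fix x y
  assume xy: "{x, y} \<in> E" "x \<noteq> y" and "(x, y) \<in> reach (E - {{x, y}})"
  obtain ws where distinct: "distinct (x # ws)"
    and walk: "successively (\<lambda>a b. {a, b} \<in> E - {{x, y}}) (x # ws)" and last: "last (x # ws) = y"
    using \<open>(x, y) \<in> reach (E - {{x, y}})\<close> by (rule distinct_walk_if_reach)
  have "ws \<noteq> []"
    using xy(2) last by auto
  moreover have "ws \<noteq> [y]"
  proof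
    assume "ws = [y]"
    then show False using walk by simp
  qed
  ultimately have len: "length (x # ws) \<ge> 3"
    using last by (cases ws rule: remdups_adj.cases) auto
  have "successively (\<lambda>a b. {a, b} \<in> E) (x # ws)"
    using walk by (rule successively_mono) auto
  then have "successively (\<lambda>a b. {a, b} \<in> E) ((x # ws) @ [hd (x # ws)])"
    using last xy(1) unfolding successively_append_iff by (simp add: insert_commute)
  then have "\<forall>i < length (x # ws). {(x # ws) ! i, (x # ws) ! ((i + 1) mod length (x # ws))} \<in> E"
    by (subst cyclic_nth_iff_successively) simp_all
  with len distinct have "\<not> graph_acyclic E"
    unfolding graph_acyclic_def by blast
  then show False
    using assms by contradiction
qed

lemma graph_acyclic_if_forest:
  assumes "forest E"
  shows "graph_acyclic E"
  unfolding graph_acyclic_def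
proof
  assume "\<exists>vs. length vs \<ge> 3 \<and> distinct vs \<and>
    (\<forall>i < length vs. {vs ! i, vs ! ((i + 1) mod length vs)} \<in> E)"
  then obtain vs where len: "length vs \<ge> 3" and distinct: "distinct vs"
    and cycle: "\<forall>i < length vs. {vs ! i, vs ! ((i + 1) mod length vs)} \<in> E"
    by blast
  obtain x y zs where vs: "vs = x # y # zs"
    using len by (cases vs rule: remdups_adj.cases) auto
  have "zs \<noteq> []"
    using len vs by auto
  have "successively (\<lambda>a b. {a, b} \<in> E) (x # y # zs @ [x])"
    using cycle cyclic_nth_iff_successively[of vs "\<lambda>a b. {a, b} \<in> E"] vs by simp
  then have edges: "{x, y} \<in> E" "{y, hd zs} \<in> E" "successively (\<lambda>a b. {a, b} \<in> E) zs"
    "{last zs, x} \<in> E"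
    using \<open>zs \<noteq> []\<close> by (auto simp: successively_append_iff successively_Cons)
  have "x \<notin> set zs" "y \<notin> set zs" "x \<noteq> y"
    using distinct vs by auto
  have "successively (\<lambda>a b. {a, b} \<in> E - {{x, y}}) zs"
    using edges(3) by (rule successively_mono) (use \<open>x \<notin> set zs\<close> \<open>y \<notin> set zs\<close> in auto)
  moreover have "hd zs \<notin> {x, y}" "last zs \<notin> {x, y}"
    using \<open>x \<notin> set zs\<close> \<open>y \<notin> set zs\<close> \<open>zs \<noteq> []\<close> by auto
  ultimately have "successively (\<lambda>a b. {a, b} \<in> E - {{x, y}}) (y # zs @ [x])"
    using edges \<open>zs \<noteq> []\<close> by (auto simp: successively_append_iff successively_Cons)
  from reach_if_walk[OF this] have "(y, x) \<in> reach (E - {{x, y}})"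
    by simp
  then have "(x, y) \<in> reach (E - {{x, y}})"
    by (rule reach_sym)
  with forest_bridge[OF assms edges(1) \<open>x \<noteq> y\<close>] show False ..
qed

lemma forest_subset:
  assumes "forest E" "E' \<subseteq> E"
  shows "forest E'"
proof -
  have "reach (E' - {{x, y}}) \<subseteq> reach (E - {{x, y}})" for x y
    using assms(2) by (intro reach_mono) blast
  with assms show ?thesis
    unfolding forest_def by blast
qed

lemma forest_insert_edge:
  assumes forest: "forest D" and pq: "(p, q) \<notin> reach D"
  shows "forest (insert {p, q} D)"
  unfolding forest_def
proof (intro allI impI notI)
  fix x y
  assume xy: "{x, y} \<in> insert {p, q} D" "x \<noteq> y"
    and cycle: "(x, y) \<in> reach (insert {p, q} D - {{x, y}})"
  show False
  proof (cases "{x, y} = {p, q}")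
    case True
    then have "(x, y) \<in> reach D"
      using cycle reach_mono[of "insert {p, q} D - {{x, y}}" D] by blast
    with True pq show False
      by (auto simp: doubleton_eq_iff dest: reach_sym)
  next
    case False
    then have "{x, y} \<in> D"
      using xy(1) by simp
    have "insert {p, q} D - {{x, y}} = insert {p, q} (D - {{x, y}})"
      using False by blast
    with cycle have "(x, y) \<in> reach (insert {p, q} (D - {{x, y}}))"
      by simp
    moreover have "reach (D - {{x, y}}) \<subseteq> reach D"
      by (rule reach_mono) blast
    ultimately have "(x, y) \<in> reach (D - {{x, y}}) \<or>
        (x, p) \<in> reach D \<and> (q, y) \<in> reach D \<or> (x, q) \<in> reach D \<and> (p, y) \<in> reach D"
      by (blast dest: reach_insert_edgeD)
    moreover have "(x, y) \<notin> reach (D - {{x, y}})"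
      using forest \<open>{x, y} \<in> D\<close> xy(2) by (rule forest_bridge)
    moreover have "(x, y) \<in> reach D"
      using \<open>{x, y} \<in> D\<close> by (rule reach_edge)
    ultimately consider "(x, p) \<in> reach D" "(q, y) \<in> reach D"
      | "(x, q) \<in> reach D" "(p, y) \<in> reach D"
      by blast
    then have "(p, q) \<in> reach D"
    proof cases
      case 1
      show ?thesis
        by (rule reach_trans[OF reach_trans[OF reach_sym[OF 1(1)] \<open>(x, y) \<in> reach D\<close>]
              reach_sym[OF 1(2)]])
    next
      case 2
      show ?thesis
        by (rule reach_trans[OF reach_trans[OF 2(2) reach_sym[OF \<open>(x, y) \<in> reach D\<close>]] 2(1)])
    qed
    with pq show False ..
  qed
qed

lemma reach_Diff_edge_at_unreachable:
  assumes "(a, b) \<notin> reach D" and "(a, x) \<in> reach D"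
  shows "(a, x) \<in> reach (D - {{b, c}})"
proof -
  have "D \<subseteq> insert {b, c} (D - {{b, c}})"
    by blast
  with assms(2) have "(a, x) \<in> reach (insert {b, c} (D - {{b, c}}))"
    using reach_mono by blast
  then consider "(a, x) \<in> reach (D - {{b, c}})" | "(a, b) \<in> reach (D - {{b, c}})"
    | "(b, x) \<in> reach (D - {{b, c}})"
    by (blast dest: reach_insert_edgeD)
  moreover have "reach (D - {{b, c}}) \<subseteq> reach D"
    by (rule reach_mono) blast
  ultimately show ?thesis
  proof cases
    case 3
    then have "(b, x) \<in> reach D"
      using \<open>reach (D - {{b, c}}) \<subseteq> reach D\<close> by blast
    then show ?thesis
      using assms reach_trans[OF assms(2) reach_sym] by blast
  qed (use assms in blast)+
qed

lemma graph_connected_iff_reach: "graph_connected n E \<longleftrightarrow> (\<forall>u\<in>{1..n}. \<forall>v\<in>{1..n}. (u, v) \<in> reach E)"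
  unfolding graph_connected_def reach_def ..

lemma graph_connected_insert_edge:
  assumes "\<forall>x\<in>{1..n}. (p, x) \<in> reach D \<or> (q, x) \<in> reach D"
  shows "graph_connected n (insert {p, q} D)"
proof -
  have sub: "reach D \<subseteq> reach (insert {p, q} D)"
    by (rule reach_mono) blast
  have pq: "(p, q) \<in> reach (insert {p, q} D)"
    by (rule reach_edge) simp
  have p_reach: "(p, x) \<in> reach (insert {p, q} D)" if "x \<in> {1..n}" for x
    using assms that sub reach_trans[OF pq] by blast
  show ?thesis
  proof (unfold graph_connected_iff_reach, intro ballI)
    fix a b
    assume "a \<in> {1..n}" "b \<in> {1..n}"
    then show "(a, b) \<in> reach (insert {p, q} D)"
      using reach_trans[OF reach_sym[OF p_reach] p_reach] by blast
  qed
qed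

lemma graph_connected_Diff_edge:
  assumes "graph_connected n T" "{u, v} \<in> T" "u \<in> {1..n}" "x \<in> {1..n}"
  shows "(u, x) \<in> reach (T - {{u, v}}) \<or> (v, x) \<in> reach (T - {{u, v}})"
proof -
  have "(u, x) \<in> reach T"
    using assms unfolding graph_connected_iff_reach by blast
  then have "(u, x) \<in> reach (insert {u, v} (T - {{u, v}}))"
    using assms(2) by (simp add: insert_absorb)
  from reach_insert_edgeD[OF this] show ?thesis
    by auto
qed

section \<open>Reattaching an edge of a spanning tree\<close>

lemma spanning_trees_iff_forest:
  "T \<in> spanning_trees n \<longleftrightarrow> T \<subseteq> Kn_edges n \<and> graph_connected n T \<and> forest T"
  unfolding spanning_trees_def using forest_if_graph_acyclic graph_acyclic_if_forest by blast

lemma doubleton_in_Kn_edges_iff: "{a, b} \<in> Kn_edges n \<longleftrightarrow> a \<in> {1..n} \<and> b \<in> {1..n} \<and> a \<noteq> b"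
  unfolding Kn_edges_def by (auto simp: doubleton_eq_iff)

lemma finite_Kn_edges: "finite (Kn_edges n)"
proof -
  have "Kn_edges n \<subseteq> Pow {1..n}"
    unfolding Kn_edges_def by blast
  then show ?thesis
    by (rule finite_subset) simp
qed

lemma finite_spanning_trees: "finite (spanning_trees n)"
proof -
  have "spanning_trees n \<subseteq> Pow (Kn_edges n)"
    unfolding spanning_trees_def by blast
  then show ?thesis
    using finite_Kn_edges by (rule finite_subset[OF _ finite_Pow_iff[THEN iffD2]])
qed

lemma reattach_in_spanning_trees:
  assumes T: "T \<in> spanning_trees n" and ab: "{a, b} \<in> T"
    and w: "w \<in> {1..n}" and aw: "(a, w) \<in> reach (T - {{a, b}})"
  shows "insert {b, w} (T - {{a, b}}) \<in> spanning_trees n"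
proof -
  define D where "D = T - {{a, b}}"
  have tree: "T \<subseteq> Kn_edges n" "graph_connected n T" "forest T"
    using T by (simp_all add: spanning_trees_iff_forest)
  then have a: "a \<in> {1..n}" and b: "b \<in> {1..n}" and "a \<noteq> b"
    using ab doubleton_in_Kn_edges_iff by auto
  have ab_apart: "(a, b) \<notin> reach D"
    unfolding D_def using tree(3) ab \<open>a \<noteq> b\<close> by (rule forest_bridge)
  have bw_apart: "(b, w) \<notin> reach D"
  proof
    assume "(b, w) \<in> reach D"
    then have "(a, b) \<in> reach D"
      by (rule reach_trans[OF aw[folded D_def] reach_sym])
    with ab_apart show False ..
  qed
  then have "b \<noteq> w"
    by auto
  have "forest (insert {b, w} D)"
    using forest_insert_edge[OF forest_subset[OF tree(3)] bw_apart] unfolding D_def by blast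
  moreover have "graph_connected n (insert {b, w} D)"
  proof (rule graph_connected_insert_edge, intro ballI)
    fix x
    assume "x \<in> {1..n}"
    then have "(a, x) \<in> reach D \<or> (b, x) \<in> reach D"
      using graph_connected_Diff_edge[OF tree(2) ab a] unfolding D_def by blast
    moreover have "(w, a) \<in> reach D"
      using aw unfolding D_def by (rule reach_sym)
    ultimately show "(b, x) \<in> reach D \<or> (w, x) \<in> reach D"
      by (meson reach_trans)
  qed
  moreover have "insert {b, w} D \<subseteq> Kn_edges n"
    using tree(1) b w \<open>b \<noteq> w\<close> doubleton_in_Kn_edges_iff unfolding D_def by blast
  ultimately show ?thesis
    unfolding D_def spanning_trees_iff_forest by blast
qed

lemma reattach_inj:
  assumes apart: "(a, b) \<notin> reach D1" "(a, b) \<notin> reach D2"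
    and w: "(a, w1) \<in> reach D1" "(a, w2) \<in> reach D2"
    and eq: "insert {b, w1} D1 = insert {b, w2} D2"
    and forest: "forest (insert {b, w1} D1)"
  shows "D1 = D2 \<and> w1 = w2"
proof -
  define T' where "T' = insert {b, w1} D1"
  have "{b, w} \<notin> D" if "(a, b) \<notin> reach D" "(a, w) \<in> reach D" for D w
    using that reach_trans[OF that(2) reach_sym[OF reach_edge]] by blast
  with apart w have "{b, w1} \<notin> D1" "{b, w2} \<notin> D2"
    by blast+
  then have D1: "D1 = T' - {{b, w1}}" and D2: "D2 = T' - {{b, w2}}"
    unfolding T'_def by (simp, simp add: eq)
  have "b \<noteq> w1"
    using apart(1) w(1) by auto
  have "w1 = w2"
  proof (rule ccontr)
    \<comment> \<open>otherwise the walk b, w2 \<leadsto> a \<leadsto> w1 avoids the edge {b, w1} of T'\<close>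
    assume "w1 \<noteq> w2"
    then have "{b, w2} \<in> T' - {{b, w1}}"
      using eq unfolding T'_def by (auto simp: doubleton_eq_iff)
    then have "(b, w2) \<in> reach (T' - {{b, w1}})"
      by (rule reach_edge)
    moreover have "(a, w2) \<in> reach (T' - {{b, w1}})"
    proof -
      have "(a, w2) \<in> reach (D2 - {{b, w1}})"
        by (rule reach_Diff_edge_at_unreachable[OF apart(2) w(2)])
      moreover have "reach (D2 - {{b, w1}}) \<subseteq> reach (T' - {{b, w1}})"
        unfolding D2 by (rule reach_mono) blast
      ultimately show ?thesis
        by blast
    qed
    moreover have "(a, w1) \<in> reach (T' - {{b, w1}})"
      using w(1) D1 by simp
    ultimately have "(b, w1) \<in> reach (T' - {{b, w1}})"
      by (meson reach_sym reach_trans)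
    moreover have "{b, w1} \<in> T'"
      unfolding T'_def by simp
    ultimately show False
      using forest_bridge[OF forest[folded T'_def] _ \<open>b \<noteq> w1\<close>] by blast
  qed
  with D1 D2 show ?thesis
    by simp
qed

lemma card_reattach_le:
  assumes ab: "{a, b} \<in> Kn_edges n" and Y: "{a, b} \<notin> Y"
  shows "card {(T, w). T \<in> spanning_trees n \<and> insert {a, b} Y \<subseteq> T \<and> w \<in> {1..n} \<and>
      (a, w) \<in> reach (T - {{a, b}})} \<le> card {T \<in> spanning_trees n. Y \<subseteq> T}"
    (is "card ?P \<le> card ?B")
proof (rule card_inj_on_le)
  let ?reattach = "\<lambda>(T, w). insert {b, w} (T - {{a, b}})"
  have "a \<noteq> b"
    using ab doubleton_in_Kn_edges_iff by blast
  have apart: "(a, b) \<notin> reach (T - {{a, b}})" if "(T, w) \<in> ?P" for T w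
  proof -
    have "forest T" "{a, b} \<in> T"
      using that unfolding spanning_trees_iff_forest by auto
    then show ?thesis
      using \<open>a \<noteq> b\<close> by (rule forest_bridge)
  qed
  have tree: "insert {b, w} (T - {{a, b}}) \<in> spanning_trees n" if "(T, w) \<in> ?P" for T w
  proof -
    from that have "T \<in> spanning_trees n" "{a, b} \<in> T" "w \<in> {1..n}" "(a, w) \<in> reach (T - {{a, b}})"
      by auto
    then show ?thesis
      by (rule reattach_in_spanning_trees)
  qed
  show "?reattach ` ?P \<subseteq> ?B"
  proof
    fix T'
    assume "T' \<in> ?reattach ` ?P"
    then obtain T w where "(T, w) \<in> ?P" "T' = insert {b, w} (T - {{a, b}})"
      by auto
    with tree Y show "T' \<in> ?B"
      by auto
  qed
  show "inj_on ?reattach ?P"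
  proof (rule inj_onI)
    fix p1 p2
    assume "p1 \<in> ?P" "p2 \<in> ?P" "?reattach p1 = ?reattach p2"
    moreover obtain T1 w1 T2 w2 where p: "p1 = (T1, w1)" "p2 = (T2, w2)"
      by fastforce
    ultimately have P: "(T1, w1) \<in> ?P" "(T2, w2) \<in> ?P"
      and eq: "insert {b, w1} (T1 - {{a, b}}) = insert {b, w2} (T2 - {{a, b}})"
      by simp_all
    have "forest (insert {b, w1} (T1 - {{a, b}}))"
      using tree[OF P(1)] spanning_trees_iff_forest by simp
    moreover have "(a, w1) \<in> reach (T1 - {{a, b}})" "(a, w2) \<in> reach (T2 - {{a, b}})"
      using P by simp_all
    ultimately have "T1 - {{a, b}} = T2 - {{a, b}} \<and> w1 = w2"
      using reattach_inj[OF apart[OF P(1)] apart[OF P(2)] _ _ eq] by blast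
    with P show "p1 = p2"
      unfolding p by blast
  qed
  show "finite ?B"
    using finite_spanning_trees by simp
qed

lemma card_spanning_trees_insert_edge_le:
  assumes f: "f \<in> Kn_edges n" and Y: "f \<notin> Y"
  shows "n * card {T \<in> spanning_trees n. insert f Y \<subseteq> T} \<le> 2 * card {T \<in> spanning_trees n. Y \<subseteq> T}"
proof -
  obtain u v where uv: "f = {u, v}" "u \<in> {1..n}"
    using f unfolding Kn_edges_def by blast
  define A where "A = {T \<in> spanning_trees n. insert f Y \<subseteq> T}"
  define P where "P a b = {(T, w). T \<in> spanning_trees n \<and> insert {a, b} Y \<subseteq> T \<and> w \<in> {1..n} \<and>
      (a, w) \<in> reach (T - {{a, b}})}" for a b
  have "(T, w) \<in> P u v \<union> P v u" if "T \<in> A" "w \<in> {1..n}" for T w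
  proof -
    have "graph_connected n T" "{u, v} \<in> T"
      using that(1) uv(1) unfolding A_def spanning_trees_iff_forest by auto
    from graph_connected_Diff_edge[OF this uv(2) that(2)] show ?thesis
      using that uv(1) unfolding A_def P_def by (auto simp: insert_commute)
  qed
  then have "A \<times> {1..n} \<subseteq> P u v \<union> P v u"
    by blast
  have "finite (P u v \<union> P v u)"
    by (rule finite_subset[of _ "spanning_trees n \<times> {1..n}"])
      (auto simp: P_def finite_spanning_trees)
  have "card A * n = card (A \<times> {1..n})"
    by (simp add: card_cartesian_product)
  also have "\<dots> \<le> card (P u v \<union> P v u)"
    by (rule card_mono) fact+
  also have "\<dots> \<le> card (P u v) + card (P v u)"
    by (rule card_Un_le)
  also have "\<dots> \<le> 2 * card {T \<in> spanning_trees n. Y \<subseteq> T}"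
    using card_reattach_le[of u v n Y] card_reattach_le[of v u n Y] f Y uv(1)
    unfolding P_def by (simp add: insert_commute)
  finally show ?thesis
    unfolding A_def by (simp add: mult.commute)
qed

section \<open>Spread families\<close>

lemma card_link: "finite F \<Longrightarrow> card (link F X) = card {A \<in> F. X \<subseteq> A}"
proof -
  have "link F X = (\<lambda>A. A - X) ` {A \<in> F. X \<subseteq> A}"
    unfolding link_def by blast
  moreover have "inj_on (\<lambda>A. A - X) {A \<in> F. X \<subseteq> A}"
    by (rule inj_onI) blast
  ultimately show "card (link F X) = card {A \<in> F. X \<subseteq> A}"
    by (simp add: card_image)
qed

lemma link_empty [simp]: "link F {} = F"
  unfolding link_def by simp

lemma link_link:
  assumes "X \<inter> T = {}"
  shows "link (link F T) X = link F (T \<union> X)"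
proof
  show "link (link F T) X \<subseteq> link F (T \<union> X)"
    unfolding link_def by blast
  show "link F (T \<union> X) \<subseteq> link (link F T) X"
  proof
    fix C
    assume "C \<in> link F (T \<union> X)"
    then obtain A where A: "C = A - (T \<union> X)" "A \<in> F" "T \<union> X \<subseteq> A"
      unfolding link_def by blast
    then have "A - T \<in> link F T" "X \<subseteq> A - T" "C = (A - T) - X"
      using assms unfolding link_def by blast+
    then show "C \<in> link (link F T) X"
      unfolding link_def by blast
  qed
qed

lemma link_link_eq_empty: "X \<inter> T \<noteq> {} \<Longrightarrow> link (link F T) X = {}"
  unfolding link_def by blast

lemma card_supersets_pow_le:
  fixes r :: real
  assumes ext: "\<And>Y f. f \<in> M \<Longrightarrow> f \<notin> Y \<Longrightarrow> r * card {A \<in> F. insert f Y \<subseteq> A} \<le> card {A \<in> F. Y \<subseteq> A}"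
    and "r \<ge> 0" and "finite X" "X \<subseteq> M" "X \<inter> T = {}"
  shows "r ^ card X * card {A \<in> F. T \<union> X \<subseteq> A} \<le> card {A \<in> F. T \<subseteq> A}"
  using \<open>finite X\<close> \<open>X \<subseteq> M\<close> \<open>X \<inter> T = {}\<close>
proof (induction X rule: finite_induct)
  case (insert f X)
  have "r ^ card (insert f X) * card {A \<in> F. T \<union> insert f X \<subseteq> A}
      = r ^ card X * (r * card {A \<in> F. insert f (T \<union> X) \<subseteq> A})"
    using insert.hyps by simp
  also have "\<dots> \<le> r ^ card X * card {A \<in> F. T \<union> X \<subseteq> A}"
    using insert.hyps insert.prems \<open>r \<ge> 0\<close> by (intro mult_left_mono ext) auto
  also have "\<dots> \<le> card {A \<in> F. T \<subseteq> A}"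
    using insert.IH insert.prems by blast
  finally show ?case .
qed simp

lemma rt_spread_empty: "rt_spread {} r t F"
  unfolding rt_spread_def spread_def by simp

lemma rt_spread_if_card_insert_le:
  fixes r :: real
  assumes "finite M" "finite F" "r > 0"
    and ext: "\<And>Y f. f \<in> M \<Longrightarrow> f \<notin> Y \<Longrightarrow> r * card {A \<in> F. insert f Y \<subseteq> A} \<le> card {A \<in> F. Y \<subseteq> A}"
  shows "rt_spread M r t F"
  unfolding rt_spread_def spread_def
proof (intro allI impI, elim conjE)
  fix T X
  assume "X \<subseteq> M"
  show "card (link (link F T) X) \<le> r powi - int (card X) * card (link F T)"
  proof (cases "X \<inter> T = {}")
    case True
    have "r ^ card X * card {A \<in> F. T \<union> X \<subseteq> A} \<le> card {A \<in> F. T \<subseteq> A}"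
      using card_supersets_pow_le[OF ext] \<open>r > 0\<close> \<open>X \<subseteq> M\<close> True finite_subset[OF \<open>X \<subseteq> M\<close> \<open>finite M\<close>]
      by simp
    with True \<open>r > 0\<close> \<open>finite F\<close> show ?thesis
      by (simp add: link_link card_link power_int_minus field_simps)
  qed (use \<open>r > 0\<close> in \<open>simp add: link_link_eq_empty power_int_minus\<close>)
qed

theorem lemma4p3:
  fixes n :: nat
  shows "rt_spread (Kn_edges n) (real n / 2) (n - 1) (spanning_trees n)"
proof (cases "n \<le> 1")
  case True
  then have "Kn_edges n = {}"
    unfolding Kn_edges_def by auto
  then show ?thesis
    by (simp add: rt_spread_empty)
next
  case False
  show ?thesis
  proof (rule rt_spread_if_card_insert_le[OF finite_Kn_edges finite_spanning_trees])
    show "real n / 2 > 0"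
      using False by simp
    fix Y f
    assume "f \<in> Kn_edges n" "f \<notin> Y"
    from card_spanning_trees_insert_edge_le[OF this]
    show "real n / 2 * card {T \<in> spanning_trees n. insert f Y \<subseteq> T}
        \<le> card {T \<in> spanning_trees n. Y \<subseteq> T}"
      by (simp add: field_simps flip: of_nat_mult)
  qed
qed

end
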